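(* For a meet-semilattice $A$, the following are equivalent: (1) $A$ is proHeyting. (2) $\mathcal{BL}(\mathcal{DM} A) = \mathcal{DM} A$. (3) $\mathrm{p}\mathcal{H}(\mathcal{DM} A) = \mathcal{DM} A$.
   Context: Let $A$ be a meet-semilattice. $\mathcal{DM} A$ is the Dedekind-MacNeille completion of $A$ (the complete lattice of normal ideals $N=N^{u\ell}$ of $A$). A join $\bigvee S$ existing in $A$ is distributive if $a\wedge\bigvee S=\bigvee\{a\wedge s: s\in S\}$ for all $a\in A$; a D-ideal is a downset closed under all distributive joins of its subsets; $\mathcal{BL} A$ (the Bruns-Lakser completion) is the frame of D-ideals of $A$. A relative annihilator of $A$ is a downset $\langle a,b\rangle=\{x\in A: a\wedge x\le b\}$; $\mathcal{R} A$ is the poset of relative annihilators. $A$ is proHeyting if every relative annihilator is a normal ideal. The proHeyting extension $\mathrm{p}\mathcal{H} B$ of a meet-semilattice $B$ is the bounded sublattice of $\mathcal{BL} B$ generated by the relative annihilators of $B$. $A$ is identified with its principal downsets, so $A\le\mathcal{DM} A\le\mathcal{BL} A$; for $A\le B\le\mathcal{BL} A$ one has $\mathcal{BL} B\cong\mathcal{BL} A$, and these are identified (so in particular $\mathcal{BL}(\mathcal{DM} A)=\mathcal{BL} A$), and $\mathcal{R} A$ is identified with its image in $\mathcal{R} B$ via $\langle a,b\rangle_A\mapsto\langle a,b\rangle_B$. *)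

theory Defs
  imports Main
begin

text \<open>A meet-semilattice A is the carrier UNIV of a type of class semilattice_inf with (\<le>) and inf;
  its Dedekind-MacNeille completion DM A is the carrier of normal ideals with (\<subseteq>) and (\<inter>).\<close>

definition ubs :: "'b set \<Rightarrow> ('b \<Rightarrow> 'b \<Rightarrow> bool) \<Rightarrow> 'b set \<Rightarrow> 'b set" where
  "ubs P le S = {x \<in> P. \<forall>s\<in>S. le s x}"

definition lbs :: "'b set \<Rightarrow> ('b \<Rightarrow> 'b \<Rightarrow> bool) \<Rightarrow> 'b set \<Rightarrow> 'b set" where
  "lbs P le S = {x \<in> P. \<forall>s\<in>S. le x s}"

definition is_join :: "'b set \<Rightarrow> ('b \<Rightarrow> 'b \<Rightarrow> bool) \<Rightarrow> 'b set \<Rightarrow> 'b \<Rightarrow> bool" where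
  "is_join P le S j \<longleftrightarrow> j \<in> ubs P le S \<and> (\<forall>u\<in>ubs P le S. le j u)"

definition distributive_join ::
  "'b set \<Rightarrow> ('b \<Rightarrow> 'b \<Rightarrow> bool) \<Rightarrow> ('b \<Rightarrow> 'b \<Rightarrow> 'b) \<Rightarrow> 'b set \<Rightarrow> 'b \<Rightarrow> bool" where
  "distributive_join P le mt S j \<longleftrightarrow>
     is_join P le S j \<and> (\<forall>a\<in>P. is_join P le ((\<lambda>s. mt a s) ` S) (mt a j))"

definition is_downset :: "'b set \<Rightarrow> ('b \<Rightarrow> 'b \<Rightarrow> bool) \<Rightarrow> 'b set \<Rightarrow> bool" where
  "is_downset P le I \<longleftrightarrow> I \<subseteq> P \<and> (\<forall>x\<in>I. \<forall>y\<in>P. le y x \<longrightarrow> y \<in> I)"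

definition D_ideal :: "'b set \<Rightarrow> ('b \<Rightarrow> 'b \<Rightarrow> bool) \<Rightarrow> ('b \<Rightarrow> 'b \<Rightarrow> 'b) \<Rightarrow> 'b set \<Rightarrow> bool" where
  "D_ideal P le mt I \<longleftrightarrow> is_downset P le I \<and>
     (\<forall>S j. S \<subseteq> I \<longrightarrow> distributive_join P le mt S j \<longrightarrow> j \<in> I)"

definition BL :: "'b set \<Rightarrow> ('b \<Rightarrow> 'b \<Rightarrow> bool) \<Rightarrow> ('b \<Rightarrow> 'b \<Rightarrow> 'b) \<Rightarrow> 'b set set" where
  "BL P le mt = {I. D_ideal P le mt I}"

definition principal_downset :: "'b set \<Rightarrow> ('b \<Rightarrow> 'b \<Rightarrow> bool) \<Rightarrow> 'b \<Rightarrow> 'b set" where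
  "principal_downset P le a = {x \<in> P. le x a}"

definition DM :: "'b set \<Rightarrow> ('b \<Rightarrow> 'b \<Rightarrow> bool) \<Rightarrow> 'b set set" where
  "DM P le = {N. N \<subseteq> P \<and> N = lbs P le (ubs P le N)}"

definition rel_ann :: "'b set \<Rightarrow> ('b \<Rightarrow> 'b \<Rightarrow> bool) \<Rightarrow> ('b \<Rightarrow> 'b \<Rightarrow> 'b) \<Rightarrow> 'b \<Rightarrow> 'b \<Rightarrow> 'b set" where
  "rel_ann P le mt a b = {x \<in> P. le (mt a x) b}"

definition proHeyting :: "'b set \<Rightarrow> ('b \<Rightarrow> 'b \<Rightarrow> bool) \<Rightarrow> ('b \<Rightarrow> 'b \<Rightarrow> 'b) \<Rightarrow> bool" where
  "proHeyting P le mt \<longleftrightarrow> (\<forall>a\<in>P. \<forall>b\<in>P. rel_ann P le mt a b \<in> DM P le)"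

text \<open>Meets in BL are intersections, joins are the D-ideals generated by unions,
  bottom is the least D-ideal, top is P.\<close>
inductive_set pH :: "'b set \<Rightarrow> ('b \<Rightarrow> 'b \<Rightarrow> bool) \<Rightarrow> ('b \<Rightarrow> 'b \<Rightarrow> 'b) \<Rightarrow> 'b set set"
  for P le mt where
  ann: "a \<in> P \<Longrightarrow> b \<in> P \<Longrightarrow> rel_ann P le mt a b \<in> pH P le mt"
| bot: "\<Inter>(BL P le mt) \<in> pH P le mt"
| top: "P \<in> pH P le mt"
| meet: "I \<in> pH P le mt \<Longrightarrow> J \<in> pH P le mt \<Longrightarrow> I \<inter> J \<in> pH P le mt"
| join: "I \<in> pH P le mt \<Longrightarrow> J \<in> pH P le mt \<Longrightarrow>
           \<Inter>{K \<in> BL P le mt. I \<union> J \<subseteq> K} \<in> pH P le mt"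

end

theory Submission
  imports Defs
begin

text \<open>
  If every relative annihilator of A is a normal ideal, then for normal ideals N, U the set
  {x. \<forall>y\<in>N. y \<sqinter> x \<in> U} is an intersection of relative annihilators, hence normal. Consequently
  every join in DM A, namely the normal closure of the union, distributes over meets, so a
  D-ideal of DM A contains the join of its elements and is principal: BL (DM A) = DM A.
  Conversely, the relative annihilator of two principal ideals in DM A is a D-ideal lying in
  pH (DM A); if it is principal, generated by K, then K is the corresponding relative annihilator
  of A, which is therefore normal. Since DM A \<subseteq> pH (DM A) \<subseteq> BL (DM A), the three conditions
  form a cycle of implications.
\<close>

lemma carrier_in_BL: "P \<in> BL P le mt"
  unfolding BL_def D_ideal_def is_downset_def distributive_join_def is_join_def ubs_def by auto

lemma Inter_in_BL:
  assumes "F \<subseteq> BL P le mt" and "F \<noteq> {}"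
  shows "\<Inter>F \<in> BL P le mt"
  unfolding BL_def D_ideal_def is_downset_def
proof (intro CollectI conjI allI impI ballI)
  show "\<Inter>F \<subseteq> P" using assms unfolding BL_def D_ideal_def is_downset_def by blast
next
  fix x y assume "x \<in> \<Inter>F" "y \<in> P" "le y x"
  then show "y \<in> \<Inter>F" using assms(1) unfolding BL_def D_ideal_def is_downset_def by blast
next
  fix S j assume "S \<subseteq> \<Inter>F" "distributive_join P le mt S j"
  then show "j \<in> \<Inter>F" using assms(1) unfolding BL_def D_ideal_def by blast
qed

lemma rel_ann_in_BL:
  fixes P :: "'c set set"
  assumes "a \<in> P" and "b \<in> P"
  shows "rel_ann P (\<subseteq>) (\<inter>) a b \<in> BL P (\<subseteq>) (\<inter>)"
  unfolding BL_def D_ideal_def is_downset_def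
proof (intro CollectI conjI allI impI ballI)
  fix S j
  assume S: "S \<subseteq> rel_ann P (\<subseteq>) (\<inter>) a b" and dj: "distributive_join P (\<subseteq>) (\<inter>) S j"
  have "is_join P (\<subseteq>) ((\<inter>) a ` S) (a \<inter> j)"
    using dj assms(1) unfolding distributive_join_def by blast
  moreover have "b \<in> ubs P (\<subseteq>) ((\<inter>) a ` S)"
    using S assms(2) unfolding ubs_def rel_ann_def by auto
  ultimately have "a \<inter> j \<subseteq> b" unfolding is_join_def by blast
  moreover have "j \<in> P" using dj unfolding distributive_join_def is_join_def ubs_def by blast
  ultimately show "j \<in> rel_ann P (\<subseteq>) (\<inter>) a b" unfolding rel_ann_def by blast
qed (auto simp: rel_ann_def)

lemma principal_downset_in_BL:
  fixes P :: "'c set set"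
  assumes "K \<in> P"
  shows "principal_downset P (\<subseteq>) K \<in> BL P (\<subseteq>) (\<inter>)"
  unfolding BL_def D_ideal_def is_downset_def
proof (intro CollectI conjI allI impI ballI)
  fix S j
  assume S: "S \<subseteq> principal_downset P (\<subseteq>) K" and dj: "distributive_join P (\<subseteq>) (\<inter>) S j"
  have "K \<in> ubs P (\<subseteq>) S" using S assms unfolding ubs_def principal_downset_def by auto
  moreover have "is_join P (\<subseteq>) S j" using dj unfolding distributive_join_def by blast
  ultimately show "j \<in> principal_downset P (\<subseteq>) K"
    unfolding is_join_def principal_downset_def ubs_def by auto
qed (auto simp: principal_downset_def)

lemma pH_subset_BL:
  fixes P :: "'c set set"
  shows "pH P (\<subseteq>) (\<inter>) \<subseteq> BL P (\<subseteq>) (\<inter>)"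
proof
  fix I assume "I \<in> pH P (\<subseteq>) (\<inter>)"
  then show "I \<in> BL P (\<subseteq>) (\<inter>)"
  proof (induction rule: pH.induct)
    case (ann a b)
    then show ?case by (rule rel_ann_in_BL)
  next
    case bot
    show ?case using carrier_in_BL by (intro Inter_in_BL) auto
  next
    case top
    show ?case by (rule carrier_in_BL)
  next
    case (meet I J)
    then show ?case using Inter_in_BL[of "{I, J}"] by simp
  next
    case (join I J)
    then have "I \<union> J \<subseteq> P" unfolding BL_def D_ideal_def is_downset_def by simp
    then show ?case using carrier_in_BL by (intro Inter_in_BL) auto
  qed
qed

lemma principal_downset_eq_rel_ann_UNIV:
  "principal_downset P (\<subseteq>) K = rel_ann P (\<subseteq>) (\<inter>) UNIV K"
  unfolding principal_downset_def rel_ann_def by simp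

lemma principal_downset_in_pH:
  fixes P :: "'c set set"
  assumes "UNIV \<in> P" and "K \<in> P"
  shows "principal_downset P (\<subseteq>) K \<in> pH P (\<subseteq>) (\<inter>)"
  unfolding principal_downset_eq_rel_ann_UNIV using assms by (rule pH.ann)

abbreviation normal_closure :: "'a::order set \<Rightarrow> 'a set" where
  "normal_closure X \<equiv> lbs UNIV (\<le>) (ubs UNIV (\<le>) X)"

lemma normal_closure_incr: "X \<subseteq> normal_closure X"
  unfolding lbs_def ubs_def by auto

lemma normal_closure_mono: "X \<subseteq> Y \<Longrightarrow> normal_closure X \<subseteq> normal_closure Y"
  unfolding lbs_def ubs_def by auto

lemma in_DM_iff: "N \<in> DM UNIV (\<le>) \<longleftrightarrow> normal_closure N \<subseteq> (N :: 'a::order set)"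
  unfolding DM_def using normal_closure_incr[of N] by auto

lemma normal_closure_least:
  "X \<subseteq> N \<Longrightarrow> N \<in> DM UNIV (\<le>) \<Longrightarrow> normal_closure X \<subseteq> (N :: 'a::order set)"
  using normal_closure_mono in_DM_iff by blast

lemma lbs_in_DM: "lbs UNIV (\<le>) S \<in> DM (UNIV :: 'a::order set) (\<le>)"
  unfolding DM_def lbs_def ubs_def by (auto intro: order_trans)

lemma normal_closure_in_DM: "normal_closure X \<in> DM (UNIV :: 'a::order set) (\<le>)"
  by (rule lbs_in_DM)

lemma UNIV_in_DM: "(UNIV :: 'a::order set) \<in> DM UNIV (\<le>)"
  using lbs_in_DM[of "{}"] unfolding lbs_def by simp

lemma atMost_in_DM: "{..a} \<in> DM (UNIV :: 'a::order set) (\<le>)"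
  using lbs_in_DM[of "{a}"] unfolding lbs_def atMost_def by simp

lemma DM_downward_closed:
  "N \<in> DM UNIV (\<le>) \<Longrightarrow> x \<in> N \<Longrightarrow> y \<le> x \<Longrightarrow> y \<in> (N :: 'a::order set)"
  unfolding DM_def lbs_def ubs_def by (auto intro: order_trans)

lemma Inter_in_DM:
  assumes "F \<subseteq> DM (UNIV :: 'a::order set) (\<le>)"
  shows "\<Inter>F \<in> DM UNIV (\<le>)"
  unfolding in_DM_iff
proof (rule Inter_greatest)
  fix N assume "N \<in> F"
  then have "\<Inter>F \<subseteq> N" and "N \<in> DM UNIV (\<le>)" using assms by auto
  then show "normal_closure (\<Inter>F) \<subseteq> N" by (rule normal_closure_least)
qed

lemma Int_in_DM:
  "M \<in> DM UNIV (\<le>) \<Longrightarrow> N \<in> DM UNIV (\<le>) \<Longrightarrow> M \<inter> N \<in> DM (UNIV :: 'a::order set) (\<le>)"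
  using Inter_in_DM[of "{M, N}"] by simp

lemma is_join_DM:
  "is_join (DM UNIV (\<le>)) (\<subseteq>) S (normal_closure (\<Union>S :: 'a::order set))"
  unfolding is_join_def
proof (intro conjI ballI)
  show "normal_closure (\<Union>S) \<in> ubs (DM UNIV (\<le>)) (\<subseteq>) S"
    using normal_closure_in_DM normal_closure_incr[of "\<Union>S"] unfolding ubs_def by blast
next
  fix U assume "U \<in> ubs (DM UNIV (\<le>)) (\<subseteq>) S"
  then have "\<Union>S \<subseteq> U" and "U \<in> DM UNIV (\<le>)" unfolding ubs_def by auto
  then show "normal_closure (\<Union>S) \<subseteq> U" by (rule normal_closure_least)
qed

lemma mem_DM_iff:
  assumes "N \<in> DM UNIV (\<le>)"
  shows "x \<in> N \<longleftrightarrow> (\<forall>m\<in>ubs UNIV (\<le>) N. x \<le> (m :: 'a::order))"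
proof -
  have "N = normal_closure N" using assms unfolding DM_def by blast
  then show ?thesis unfolding lbs_def by blast
qed

definition ideal_imp :: "'a::semilattice_inf set \<Rightarrow> 'a set \<Rightarrow> 'a set" where
  "ideal_imp N U = {x. \<forall>y\<in>N. inf y x \<in> U}"

lemma ideal_imp_eq_INT_rel_ann:
  assumes "U \<in> DM (UNIV :: 'a::semilattice_inf set) (\<le>)"
  shows "ideal_imp N U = (\<Inter>y\<in>N. \<Inter>m\<in>ubs UNIV (\<le>) U. rel_ann UNIV (\<le>) inf y m)"
  unfolding ideal_imp_def rel_ann_def mem_DM_iff[OF assms] by auto

lemma ideal_imp_in_DM:
  assumes "proHeyting (UNIV :: 'a::semilattice_inf set) (\<le>) inf" and "U \<in> DM (UNIV :: 'a set) (\<le>)"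
  shows "ideal_imp N U \<in> DM UNIV (\<le>)"
  unfolding ideal_imp_eq_INT_rel_ann[OF assms(2)]
  using assms(1) unfolding proHeyting_def by (intro Inter_in_DM image_subsetI) simp

lemma distributive_join_DM:
  fixes S :: "'a::semilattice_inf set set"
  assumes "proHeyting (UNIV :: 'a set) (\<le>) inf" and "S \<subseteq> DM UNIV (\<le>)"
  shows "distributive_join (DM UNIV (\<le>)) (\<subseteq>) (\<inter>) S (normal_closure (\<Union>S))"
  unfolding distributive_join_def
proof (intro conjI ballI is_join_DM)
  let ?K = "normal_closure (\<Union>S)"
  fix N :: "'a set" assume N: "N \<in> DM UNIV (\<le>)"
  show "is_join (DM UNIV (\<le>)) (\<subseteq>) ((\<inter>) N ` S) (N \<inter> ?K)"
    unfolding is_join_def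
  proof (intro conjI ballI)
    have "N \<inter> ?K \<in> DM UNIV (\<le>)" using N normal_closure_in_DM by (rule Int_in_DM)
    then show "N \<inter> ?K \<in> ubs (DM UNIV (\<le>)) (\<subseteq>) ((\<inter>) N ` S)"
      using normal_closure_incr unfolding ubs_def by blast
  next
    fix U assume "U \<in> ubs (DM UNIV (\<le>)) (\<subseteq>) ((\<inter>) N ` S)"
    then have U: "U \<in> DM UNIV (\<le>)" and NU: "\<forall>s\<in>S. N \<inter> s \<subseteq> U" unfolding ubs_def by auto
    have "\<Union>S \<subseteq> ideal_imp N U"
    proof
      fix x assume "x \<in> \<Union>S"
      then obtain s where s: "s \<in> S" "x \<in> s" by blast
      have "inf y x \<in> N \<inter> s" if "y \<in> N" for y
        using that s assms(2) N DM_downward_closed by (metis IntI inf_le1 inf_le2 subsetD)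
      then show "x \<in> ideal_imp N U" using NU s(1) unfolding ideal_imp_def by blast
    qed
    then have "?K \<subseteq> ideal_imp N U" using normal_closure_least ideal_imp_in_DM[OF assms(1) U] by blast
    then show "N \<inter> ?K \<subseteq> U" unfolding ideal_imp_def by (auto dest!: subsetD)
  qed
qed

lemma BL_DM_eq_principal_downsets:
  assumes "proHeyting (UNIV :: 'a::semilattice_inf set) (\<le>) inf"
  shows "BL (DM UNIV (\<le>)) (\<subseteq>) (\<inter>) = principal_downset (DM UNIV (\<le>)) (\<subseteq>) ` DM (UNIV :: 'a set) (\<le>)"
proof (intro equalityI subsetI)
  fix I :: "'a set set" assume "I \<in> BL (DM UNIV (\<le>)) (\<subseteq>) (\<inter>)"
  then have I: "D_ideal (DM UNIV (\<le>)) (\<subseteq>) (\<inter>) I" unfolding BL_def by simp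
  then have I_DM: "I \<subseteq> DM UNIV (\<le>)" unfolding D_ideal_def is_downset_def by simp
  have I_down: "y \<in> I" if "x \<in> I" "y \<in> DM UNIV (\<le>)" "y \<subseteq> x" for x y
    using I that unfolding D_ideal_def is_downset_def by blast
  let ?K = "normal_closure (\<Union>I)"
  have "?K \<in> I" using I distributive_join_DM[OF assms I_DM] unfolding D_ideal_def by blast
  have "x \<in> I \<longleftrightarrow> x \<in> DM UNIV (\<le>) \<and> x \<subseteq> ?K" for x
  proof
    assume "x \<in> I"
    then show "x \<in> DM UNIV (\<le>) \<and> x \<subseteq> ?K" using I_DM normal_closure_incr by blast
  next
    assume "x \<in> DM UNIV (\<le>) \<and> x \<subseteq> ?K"
    then show "x \<in> I" using I_down[OF \<open>?K \<in> I\<close>] by blast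
  qed
  then have "I = principal_downset (DM UNIV (\<le>)) (\<subseteq>) ?K"
    unfolding principal_downset_def by blast
  then show "I \<in> principal_downset (DM UNIV (\<le>)) (\<subseteq>) ` DM UNIV (\<le>)"
    using normal_closure_in_DM by (rule image_eqI)
qed (auto intro: principal_downset_in_BL)

lemma atMost_Int_atMost: "{..a} \<inter> {..b} = {..inf a (b :: 'a::semilattice_inf)}"
  by auto

lemma mem_rel_ann_iff_atMost:
  "x \<in> rel_ann UNIV (\<le>) inf a b \<longleftrightarrow> {..x} \<in> rel_ann (DM UNIV (\<le>)) (\<subseteq>) (\<inter>) {..a} {..b}"
  for a b x :: "'a::semilattice_inf"
  by (simp add: rel_ann_def atMost_in_DM atMost_Int_atMost)

lemma proHeyting_if_rel_ann_atMost_principal: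
  assumes "\<And>a b. rel_ann (DM UNIV (\<le>)) (\<subseteq>) (\<inter>) {..a} {..b}
    \<in> principal_downset (DM UNIV (\<le>)) (\<subseteq>) ` DM (UNIV :: 'a::semilattice_inf set) (\<le>)"
  shows "proHeyting (UNIV :: 'a set) (\<le>) inf"
  unfolding proHeyting_def
proof (intro ballI)
  fix a b :: 'a
  obtain K where K: "K \<in> DM UNIV (\<le>)"
    and eq: "rel_ann (DM UNIV (\<le>)) (\<subseteq>) (\<inter>) {..a} {..b} = principal_downset (DM UNIV (\<le>)) (\<subseteq>) K"
    using assms by blast
  have "x \<in> rel_ann UNIV (\<le>) inf a b \<longleftrightarrow> x \<in> K" for x
  proof -
    have "x \<in> rel_ann UNIV (\<le>) inf a b \<longleftrightarrow> {..x} \<in> principal_downset (DM UNIV (\<le>)) (\<subseteq>) K"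
      by (simp add: mem_rel_ann_iff_atMost eq)
    also have "\<dots> \<longleftrightarrow> x \<in> K"
      using K atMost_in_DM DM_downward_closed unfolding principal_downset_def by auto
    finally show ?thesis .
  qed
  then have "rel_ann UNIV (\<le>) inf a b = K" by blast
  then show "rel_ann UNIV (\<le>) inf a b \<in> DM UNIV (\<le>)" using K by simp
qed

theorem proposition3p12:
  fixes A :: "'a::semilattice_inf itself"
  shows "(proHeyting (UNIV::'a set) (\<le>) inf
           \<longleftrightarrow> BL (DM (UNIV::'a set) (\<le>)) (\<subseteq>) (\<inter>)
               = principal_downset (DM (UNIV::'a set) (\<le>)) (\<subseteq>) ` DM (UNIV::'a set) (\<le>))
       \<and> (BL (DM (UNIV::'a set) (\<le>)) (\<subseteq>) (\<inter>)
               = principal_downset (DM (UNIV::'a set) (\<le>)) (\<subseteq>) ` DM (UNIV::'a set) (\<le>)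
           \<longleftrightarrow> pH (DM (UNIV::'a set) (\<le>)) (\<subseteq>) (\<inter>)
               = principal_downset (DM (UNIV::'a set) (\<le>)) (\<subseteq>) ` DM (UNIV::'a set) (\<le>))"
proof -
  let ?D = "DM (UNIV::'a set) (\<le>)"
  let ?Pr = "principal_downset ?D (\<subseteq>) ` ?D"
  have principal_in_pH: "?Pr \<subseteq> pH ?D (\<subseteq>) (\<inter>)"
    by (intro image_subsetI principal_downset_in_pH UNIV_in_DM)
  have "BL ?D (\<subseteq>) (\<inter>) = ?Pr" if "proHeyting (UNIV::'a set) (\<le>) inf"
    using that by (rule BL_DM_eq_principal_downsets)
  moreover have "pH ?D (\<subseteq>) (\<inter>) = ?Pr" if "BL ?D (\<subseteq>) (\<inter>) = ?Pr"
    using pH_subset_BL[of ?D] principal_in_pH unfolding that by (rule subset_antisym)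
  moreover have "proHeyting (UNIV::'a set) (\<le>) inf" if "pH ?D (\<subseteq>) (\<inter>) = ?Pr"
  proof (rule proHeyting_if_rel_ann_atMost_principal)
    fix a b :: 'a
    show "rel_ann ?D (\<subseteq>) (\<inter>) {..a} {..b} \<in> ?Pr"
      unfolding that[symmetric] by (rule pH.ann[OF atMost_in_DM atMost_in_DM])
  qed
  ultimately show ?thesis by argo
qed

end
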